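(* Let $n\geq2$, $H=\{x\in\mathbb{R}^{n+1}:\sum_i x_i=0\}$, $p_H$ the orthogonal projection onto $H$, $V_{\mathcal{P}}=p_H(\{0,1\}^{n+1}\setminus\{(0,\dots,0),(1,\dots,1)\})$ (the vertex set of the Voronoi region of $A_n=\mathbb{Z}^{n+1}\cap H$), and let $\tilde G$ be the Cayley graph on $\frac12p_H(\mathbb{Z}^{n+1})$ with generating set $\frac12V_{\mathcal{P}}$. Then every clique $C$ of $\tilde G$ satisfies $\delta^0(C)=\frac{|C|}{|N[C]|}\leq\frac{1}{2^n}$.
   Context: In the Cayley graph, $x,y$ are adjacent iff $x-y\in\frac12V_{\mathcal{P}}$. A clique is a set of vertices any two distinct elements of which are adjacent. $N[C]=C+(\{0\}\cup\frac12V_{\mathcal{P}})$ is the closed neighborhood of $C$ in $\tilde G$. *)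

theory Defs
  imports "HOL-Analysis.Analysis"
begin

text \<open>Ambient space R^(n+1) is modelled as real^'d with CARD('d) = n+1.\<close>

definition hyperH :: "(real^'d) set" where
  "hyperH = {x. (\<Sum>i\<in>UNIV. x $ i) = 0}"

definition projH :: "real^'d \<Rightarrow> real^'d" where
  "projH x = x - (\<chi> i. (\<Sum>j\<in>UNIV. x $ j) / real CARD('d))"

definition VP :: "(real^'d) set" where
  "VP = projH ` ({x. \<forall>i. x $ i \<in> {0,1}} - {(\<chi> i. 0), (\<chi> i. 1)})"

definition cayley_vertices :: "(real^'d) set" where
  "cayley_vertices = (\<lambda>z. (1/2) *\<^sub>R projH z) ` {z. \<forall>i. z $ i \<in> \<int>}"

definition half_VP :: "(real^'d) set" where
  "half_VP = (\<lambda>v. (1/2) *\<^sub>R v) ` VP"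

definition cayley_adj :: "real^'d \<Rightarrow> real^'d \<Rightarrow> bool" where
  "cayley_adj x y \<longleftrightarrow> x \<in> cayley_vertices \<and> y \<in> cayley_vertices \<and> x - y \<in> half_VP"

definition is_clique :: "(real^'d) set \<Rightarrow> bool" where
  "is_clique C \<longleftrightarrow> C \<subseteq> cayley_vertices \<and> (\<forall>x\<in>C. \<forall>y\<in>C. x \<noteq> y \<longrightarrow> cayley_adj x y)"

definition closed_nbhd :: "(real^'d) set \<Rightarrow> (real^'d) set" where
  "closed_nbhd C = {c + v | c v. c \<in> C \<and> v \<in> insert 0 half_VP}"

end

theory Submission
  imports Defs
begin

(*
  Write the points of {0,1}^(n+1) as indicator vectors of sets of coordinates. Fixing c0 in the
  clique C, every c in C is c0 + p_H(1_S(c))/2 with S(c) a proper subset, and since p_H(x) = p_H(y)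
  only when x - y is constant, adjacency of c and c' forces S(c) and S(c') to be comparable: the
  labels form a chain. Pick a coordinate j(c) outside S(c) but inside the next larger label. The
  half-faces c + p_H{1_A : j(c) \<notin> A}/2 have 2^n points each and lie in N[C]; they are pairwise
  disjoint, because comparing the coordinates j(c) and j(c') of two representations of a common
  point gives a constant difference of at most -1 on one side and at least 0 on the other.
*)

definition indicator_vec :: "'d set \<Rightarrow> real^'d" where
  "indicator_vec S = (\<chi> i. indicator S i)"

lemma indicator_vec_nth [simp]: "indicator_vec S $ i = indicator S i"
  by (simp add: indicator_vec_def)

lemma projH_add: "projH (x + y) = projH x + projH y"
  unfolding projH_def by (simp add: vec_eq_iff sum.distrib add_divide_distrib)

lemma projH_indicator_vec_empty [simp]: "projH (indicator_vec {}) = 0"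
  unfolding projH_def by (simp add: vec_eq_iff)

lemma projH_eq_imp_diff_const:
  assumes "projH x = projH y"
  shows "x $ i - y $ i = x $ k - y $ k"
proof -
  have "projH x $ i = projH y $ i" "projH x $ k = projH y $ k"
    using assms by simp_all
  then show ?thesis
    unfolding projH_def by simp
qed

lemma inj_on_projH_indicator_vec_avoiding:
  "inj_on (\<lambda>A. projH (indicator_vec A)) (Pow (- {j}))"
proof (rule inj_onI)
  fix A B assume "A \<in> Pow (- {j})" "B \<in> Pow (- {j})"
    and "projH (indicator_vec A) = projH (indicator_vec B)"
  then have diff0: "indicator A i - indicator B i = (0::real)" for i
    using projH_eq_imp_diff_const[of _ _ i j] by fastforce
  have "i \<in> A \<longleftrightarrow> i \<in> B" for i
    using diff0[of i] by (auto split: split_indicator_asm)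
  then show "A = B"
    by blast
qed

lemma half_VP_eq:
  "(half_VP :: (real^'d) set) = (\<lambda>S. (1/2) *\<^sub>R projH (indicator_vec S)) ` {S. S \<noteq> {} \<and> S \<noteq> UNIV}"
proof -
  have "{x::real^'d. \<forall>i. x $ i \<in> {0,1}} - {\<chi> i. 0, \<chi> i. 1}
      = indicator_vec ` {S. S \<noteq> {} \<and> S \<noteq> UNIV}"
  proof (intro equalityI subsetI)
    fix x :: "real^'d"
    assume x: "x \<in> {x. \<forall>i. x $ i \<in> {0,1}} - {\<chi> i. 0, \<chi> i. 1}"
    then have "x = indicator_vec {i. x $ i = 1}"
      by (auto simp: vec_eq_iff indicator_def)
    moreover have "{i. x $ i = 1} \<noteq> {}" "{i. x $ i = 1} \<noteq> UNIV"
      using x by (auto simp: vec_eq_iff)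
    ultimately show "x \<in> indicator_vec ` {S. S \<noteq> {} \<and> S \<noteq> UNIV}"
      by blast
  qed (auto simp: vec_eq_iff indicator_def)
  then show ?thesis
    unfolding half_VP_def VP_def by (simp only: image_image)
qed

lemma subset_or_superset_if_projH_indicator_vec_eq:
  assumes "projH (indicator_vec S) = projH (indicator_vec S' + indicator_vec T)"
  shows "S \<subseteq> S' \<or> S' \<subseteq> S"
proof (rule ccontr)
  assume "\<not> ?thesis"
  then obtain i k where "i \<in> S" "i \<notin> S'" "k \<in> S'" "k \<notin> S" by blast
  moreover have "indicator S i - indicator S' i - indicator T i
      = indicator S k - indicator S' k - (indicator T k :: real)"
    using projH_eq_imp_diff_const[OF assms, of i k] by simp
  ultimately show False
    by (auto split: split_indicator_asm)
qed

lemma projH_indicator_vec_sum_neq: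
  assumes "S \<subseteq> S'" "j \<notin> S" "j \<in> S'" "j' \<notin> S'" "j \<notin> A" "j' \<notin> B"
  shows "projH (indicator_vec S + indicator_vec A) \<noteq> projH (indicator_vec S' + indicator_vec B)"
proof
  assume "projH (indicator_vec S + indicator_vec A) = projH (indicator_vec S' + indicator_vec B)"
  from projH_eq_imp_diff_const[OF this, of j j'] assms
  have "- 1 - indicator B j = (indicator A j' :: real)"
    by (auto simp: indicator_def)
  then show False
    by (auto split: split_indicator_asm)
qed

lemma finite_chain_successor_point:
  fixes \<S> :: "'a set set"
  assumes "finite \<S>" "\<And>B B'. B \<in> \<S> \<Longrightarrow> B' \<in> \<S> \<Longrightarrow> B \<subseteq> B' \<or> B' \<subseteq> B" "A \<noteq> UNIV"
  shows "\<exists>j. j \<notin> A \<and> (\<forall>B\<in>\<S>. A \<subset> B \<longrightarrow> j \<in> B)"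
proof (cases "\<exists>B\<in>\<S>. A \<subset> B")
  case False
  obtain j where "j \<notin> A"
    using assms(3) by auto
  with False show ?thesis
    by auto
next
  case True
  define \<B> where "\<B> = {B\<in>\<S>. A \<subset> B}"
  have "finite \<B>" "\<B> \<noteq> {}"
    using assms(1) True unfolding \<B>_def by auto
  then obtain M where M: "M \<in> \<B>" and min: "\<And>B. B \<in> \<B> \<Longrightarrow> B \<subseteq> M \<Longrightarrow> M = B"
    using finite_has_minimal[of \<B>] by auto
  have "M \<subseteq> B" if "B \<in> \<B>" for B
    using assms(2)[of M B] min[OF that] M that unfolding \<B>_def by auto
  moreover obtain j where "j \<in> M" "j \<notin> A"
    using M unfolding \<B>_def by auto
  ultimately show ?thesis
    unfolding \<B>_def by auto
qed

lemma finite_chain_obtain_successor_points: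
  assumes "finite I" "\<And>i k. i \<in> I \<Longrightarrow> k \<in> I \<Longrightarrow> S i \<subseteq> S k \<or> S k \<subseteq> S i"
    "\<And>i. i \<in> I \<Longrightarrow> S i \<noteq> UNIV"
  obtains j where "\<And>i. i \<in> I \<Longrightarrow> j i \<notin> S i"
    "\<And>i k. i \<in> I \<Longrightarrow> k \<in> I \<Longrightarrow> S i \<subset> S k \<Longrightarrow> j i \<in> S k"
proof -
  have "\<forall>i\<in>I. \<exists>x. x \<notin> S i \<and> (\<forall>k\<in>I. S i \<subset> S k \<longrightarrow> x \<in> S k)"
  proof
    fix i assume "i \<in> I"
    then have "\<exists>x. x \<notin> S i \<and> (\<forall>B\<in>S ` I. S i \<subset> B \<longrightarrow> x \<in> B)"
      using assms by (intro finite_chain_successor_point) auto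
    then show "\<exists>x. x \<notin> S i \<and> (\<forall>k\<in>I. S i \<subset> S k \<longrightarrow> x \<in> S k)"
      by simp
  qed
  then obtain j where "\<forall>i\<in>I. j i \<notin> S i \<and> (\<forall>k\<in>I. S i \<subset> S k \<longrightarrow> j i \<in> S k)"
    by (rule bchoice[THEN exE])
  then have "\<And>i. i \<in> I \<Longrightarrow> j i \<notin> S i"
    "\<And>i k. i \<in> I \<Longrightarrow> k \<in> I \<Longrightarrow> S i \<subset> S k \<Longrightarrow> j i \<in> S k"
    by simp_all
  then show thesis
    by (rule that)
qed

definition half_face :: "real^'d \<Rightarrow> 'd \<Rightarrow> (real^'d) set" where
  "half_face c j = (\<lambda>A. c + (1/2) *\<^sub>R projH (indicator_vec A)) ` Pow (- {j})"

lemma card_half_face: "card (half_face c j :: (real^'d) set) = 2 ^ (CARD('d) - 1)"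
proof -
  have "inj_on (\<lambda>A. c + (1/2) *\<^sub>R projH (indicator_vec A)) (Pow (- {j}))"
    using inj_on_projH_indicator_vec_avoiding[of j] by (auto simp: inj_on_def)
  then have "card (half_face c j) = card (Pow (- {j}))"
    unfolding half_face_def by (rule card_image)
  also have "\<dots> = 2 ^ (CARD('d) - 1)"
    by (simp add: card_Pow Compl_eq_Diff_UNIV card_Diff_singleton)
  finally show ?thesis .
qed

lemma closed_nbhdI:
  assumes "c \<in> C" "v \<in> insert 0 half_VP"
  shows "c + v \<in> closed_nbhd C"
  using assms unfolding closed_nbhd_def by blast

lemma half_projH_add_shift:
  assumes "c = c0 + (1/2) *\<^sub>R projH x"
  shows "c + (1/2) *\<^sub>R projH y = c0 + (1/2) *\<^sub>R projH (x + y)"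
  using assms by (simp add: projH_add scaleR_add_right add.assoc)

lemma half_face_subset_closed_nbhd:
  assumes "c \<in> C"
  shows "half_face c j \<subseteq> closed_nbhd C"
proof
  fix x assume "x \<in> half_face c j"
  then obtain A where A: "j \<notin> A" "x = c + (1/2) *\<^sub>R projH (indicator_vec A)"
    unfolding half_face_def by blast
  have "(1/2) *\<^sub>R projH (indicator_vec A) \<in> insert 0 half_VP"
    using A(1) unfolding half_VP_eq by (cases "A = {}") auto
  then show "x \<in> closed_nbhd C"
    unfolding A(2) by (rule closed_nbhdI[OF assms])
qed

lemma half_faces_disjoint:
  assumes "c = c0 + (1/2) *\<^sub>R projH (indicator_vec S)" "c' = c0 + (1/2) *\<^sub>R projH (indicator_vec S')"
    and "S \<subseteq> S'" "j \<notin> S" "j \<in> S'" "j' \<notin> S'"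
  shows "half_face c j \<inter> half_face c' j' = {}"
proof (rule ccontr)
  assume "half_face c j \<inter> half_face c' j' \<noteq> {}"
  then obtain A B where A: "j \<notin> A" and B: "j' \<notin> B"
    and eq: "c + (1/2) *\<^sub>R projH (indicator_vec A) = c' + (1/2) *\<^sub>R projH (indicator_vec B)"
    unfolding half_face_def by blast
  from eq have "c0 + (1/2) *\<^sub>R projH (indicator_vec S + indicator_vec A)
      = c0 + (1/2) *\<^sub>R projH (indicator_vec S' + indicator_vec B)"
    unfolding half_projH_add_shift[OF assms(1)] half_projH_add_shift[OF assms(2)] .
  then have "projH (indicator_vec S + indicator_vec A) = projH (indicator_vec S' + indicator_vec B)"
    by simp
  moreover have "projH (indicator_vec S + indicator_vec A) \<noteq> projH (indicator_vec S' + indicator_vec B)"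
    using assms(3-6) A B by (rule projH_indicator_vec_sum_neq)
  ultimately show False
    by contradiction
qed

lemma clique_labelling:
  fixes C :: "(real^'d) set"
  assumes "is_clique C" "c0 \<in> C"
  obtains S where
    "\<And>c. c \<in> C \<Longrightarrow> S c \<noteq> UNIV"
    "\<And>c. c \<in> C \<Longrightarrow> c = c0 + (1/2) *\<^sub>R projH (indicator_vec (S c))"
    "\<And>c c'. c \<in> C \<Longrightarrow> c' \<in> C \<Longrightarrow> S c \<subseteq> S c' \<or> S c' \<subseteq> S c"
proof -
  have diff: "\<exists>T. T \<noteq> UNIV \<and> x = y + (1/2) *\<^sub>R projH (indicator_vec T)"
    if "x \<in> C" "y \<in> C" "x \<noteq> y" for x y
  proof -
    have "x - y \<in> half_VP"
      using assms(1) that unfolding is_clique_def cayley_adj_def by blast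
    then obtain T where "T \<noteq> UNIV" "x - y = (1/2) *\<^sub>R projH (indicator_vec T)"
      unfolding half_VP_eq by blast
    then show ?thesis
      by (metis add.commute diff_add_cancel)
  qed
  have "\<forall>c\<in>C. \<exists>S. S \<noteq> UNIV \<and> c = c0 + (1/2) *\<^sub>R projH (indicator_vec S)"
  proof
    fix c assume "c \<in> C"
    show "\<exists>S. S \<noteq> UNIV \<and> c = c0 + (1/2) *\<^sub>R projH (indicator_vec S)"
    proof (cases "c = c0")
      case True
      then show ?thesis
        by (intro exI[of _ "{}"]) simp
    next
      case False
      then show ?thesis
        using diff[OF \<open>c \<in> C\<close> assms(2)] by blast
    qed
  qed
  then obtain S where S_ne: "\<And>c. c \<in> C \<Longrightarrow> S c \<noteq> UNIV"
    and S_eq: "\<And>c. c \<in> C \<Longrightarrow> c = c0 + (1/2) *\<^sub>R projH (indicator_vec (S c))"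
    by metis
  have "S c \<subseteq> S c' \<or> S c' \<subseteq> S c" if cc': "c \<in> C" "c' \<in> C" for c c'
  proof (cases "c = c'")
    case False
    then obtain T where T: "c = c' + (1/2) *\<^sub>R projH (indicator_vec T)"
      using diff cc' by blast
    have "c0 + (1/2) *\<^sub>R projH (indicator_vec (S c)) = c"
      using S_eq[OF cc'(1)] by (rule sym)
    also have "\<dots> = c0 + (1/2) *\<^sub>R projH (indicator_vec (S c') + indicator_vec T)"
      using T half_projH_add_shift[OF S_eq[OF cc'(2)]] by (rule trans)
    finally have "c0 + (1/2) *\<^sub>R projH (indicator_vec (S c))
        = c0 + (1/2) *\<^sub>R projH (indicator_vec (S c') + indicator_vec T)" .
    then have "projH (indicator_vec (S c)) = projH (indicator_vec (S c') + indicator_vec T)"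
      by simp
    then show ?thesis
      by (rule subset_or_superset_if_projH_indicator_vec_eq)
  qed simp
  with S_ne S_eq show thesis
    using that by blast
qed

lemma card_clique_mult_le_card_closed_nbhd:
  fixes C :: "(real^'d) set"
  assumes "is_clique C" "finite (closed_nbhd C)"
  shows "card C * 2 ^ (CARD('d) - 1) \<le> card (closed_nbhd C)"
proof (cases "C = {}")
  case False
  then obtain c0 where "c0 \<in> C"
    by blast
  obtain S where S_ne: "\<And>c. c \<in> C \<Longrightarrow> S c \<noteq> UNIV"
    and S_eq: "\<And>c. c \<in> C \<Longrightarrow> c = c0 + (1/2) *\<^sub>R projH (indicator_vec (S c))"
    and chain: "\<And>c c'. c \<in> C \<Longrightarrow> c' \<in> C \<Longrightarrow> S c \<subseteq> S c' \<or> S c' \<subseteq> S c"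
    using clique_labelling[OF assms(1) \<open>c0 \<in> C\<close>] by blast
  have "C \<subseteq> closed_nbhd C"
    using closed_nbhdI[of _ C 0] by fastforce
  then have "finite C"
    using assms(2) finite_subset by blast
  then obtain j where j: "\<And>c. c \<in> C \<Longrightarrow> j c \<notin> S c"
    and j_succ: "\<And>c c'. c \<in> C \<Longrightarrow> c' \<in> C \<Longrightarrow> S c \<subset> S c' \<Longrightarrow> j c \<in> S c'"
    using finite_chain_obtain_successor_points[of C S] chain S_ne by blast
  define F where "F c = half_face c (j c)" for c
  have F_disjoint_strict: "F c \<inter> F c' = {}" if "c \<in> C" "c' \<in> C" "S c \<subset> S c'" for c c'
    unfolding F_def using S_eq[OF that(1)] S_eq[OF that(2)] psubset_imp_subset[OF that(3)]
      j[OF that(1)] j_succ[OF that] j[OF that(2)]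
    by (rule half_faces_disjoint)
  have F_disjoint: "F c \<inter> F c' = {}" if "c \<in> C" "c' \<in> C" "c \<noteq> c'" for c c'
  proof -
    have "S c \<noteq> S c'"
      using S_eq[OF that(1)] S_eq[OF that(2)] that(3) by force
    with chain[OF that(1,2)] consider "S c \<subset> S c'" | "S c' \<subset> S c"
      by (auto simp only: psubset_eq)
    then show ?thesis
      using F_disjoint_strict[OF that(1,2)] F_disjoint_strict[OF that(2,1)]
      by cases (simp_all only: Int_commute)
  qed
  have F_subset: "F c \<subseteq> closed_nbhd C" if "c \<in> C" for c
    unfolding F_def using that by (rule half_face_subset_closed_nbhd)
  then have "finite (F c)" if "c \<in> C" for c
    using that assms(2) finite_subset by blast
  then have "card (\<Union>c\<in>C. F c) = (\<Sum>c\<in>C. card (F c))"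
    using F_disjoint by (intro card_UN_disjoint[OF \<open>finite C\<close>]) auto
  also have "\<dots> = card C * 2 ^ (CARD('d) - 1)"
    by (simp add: F_def card_half_face)
  finally have "card C * 2 ^ (CARD('d) - 1) = card (\<Union>c\<in>C. F c)" ..
  also have "\<dots> \<le> card (closed_nbhd C)"
    using F_subset assms(2) by (intro card_mono) auto
  finally show ?thesis .
qed simp

theorem lemma12:
  fixes C :: "(real^'d) set"
  assumes "CARD('d) \<ge> 3"
    and "is_clique C"
  shows "real (card C) / real (card (closed_nbhd C)) \<le> 1 / 2 ^ (CARD('d) - 1)"
proof (cases "finite (closed_nbhd C) \<and> closed_nbhd C \<noteq> {}")
  \<comment> \<open>The bound holds in every dimension.\<close>
  case True
  then have "real (card C) * 2 ^ (CARD('d) - 1) \<le> real (card (closed_nbhd C))"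
    using card_clique_mult_le_card_closed_nbhd[OF assms(2)]
    by (metis of_nat_le_iff of_nat_mult of_nat_numeral of_nat_power)
  moreover have "card (closed_nbhd C) > 0"
    using True by (simp add: card_gt_0_iff)
  ultimately show ?thesis
    by (simp add: field_simps)
qed auto

end
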